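(* Let $V$ be a finite ground set, let $(V,\mathcal{F})$ be a matroid whose largest independent set has cardinality $K$, and let $f:2^V\to\mathbb{R}$ be nondecreasing with submodularity ratio $\gamma$. Let $S^*\in\arg\max_{S\in\mathcal{F}} f(S)$ and let $S^{\mathrm{G}}$ be the output of the greedy algorithm described below. Then $$\frac{f(S^{\mathrm{G}})-f(\emptyset)}{f(S^* )-f(\emptyset)}\ \ge\ \frac{\gamma^3}{\gamma^3+1}.$$
   Context: $f$ is nondecreasing if $f(S_1)\le f(S_2)$ for all $S_1\subsetneqq S_2\subset V$. For $S,U\subset V$ let $\rho_U(S)=f(S\cup U)-f(S)$, and write $\rho_\omega(S)=\rho_{\{\omega\}}(S)$. The submodularity ratio of a nondecreasing $f$ is the largest $\gamma\in\mathbb{R}_+$ such that $\gamma\,\rho_\omega(S\cup U)\le\rho_\omega(S)$ for all $S,U\subset V$ and all $\omega\in V$. A matroid $(V,\mathcal{F})$: $\emptyset\in\mathcal{F}$; $\mathcal{F}$ is closed under taking subsets; and if $S_1,S_2\in\mathcal{F}$ with $|S_1|<|S_2|$ there is $\omega\in S_2\setminus S_1$ with $S_1\cup\{\omega\}\in\mathcal{F}$. Greedy algorithm: set $S=\emptyset$, $U=\emptyset$. While $U\neq V$: choose $i\in\arg\max_{i\in V\setminus U}\rho_i(S)$; if $S\cup\{i\}\notin\mathcal{F}$, set $U\leftarrow U\cup\{i\}$; otherwise set $S\leftarrow S\cup\{i\}$ and $U\leftarrow U\cup\{i\}$. When $U=V$, output $S^{\mathrm{G}}=S$. The ratio in the claim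 is considered when $f(S^* )\neq f(\emptyset)$. *)

theory Defs
  imports Complex_Main
begin

definition nondecreasing :: "'a set \<Rightarrow> ('a set \<Rightarrow> real) \<Rightarrow> bool" where
  "nondecreasing V f \<longleftrightarrow> (\<forall>S1 S2. S1 \<subset> S2 \<and> S2 \<subseteq> V \<longrightarrow> f S1 \<le> f S2)"

definition rho :: "('a set \<Rightarrow> real) \<Rightarrow> 'a set \<Rightarrow> 'a set \<Rightarrow> real" where
  "rho f U S = f (S \<union> U) - f S"

abbreviation rho1 :: "('a set \<Rightarrow> real) \<Rightarrow> 'a \<Rightarrow> 'a set \<Rightarrow> real" where
  "rho1 f w S \<equiv> rho f {w} S"

definition ratio_ok :: "'a set \<Rightarrow> ('a set \<Rightarrow> real) \<Rightarrow> real \<Rightarrow> bool" where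
  "ratio_ok V f g \<longleftrightarrow> g \<ge> 0 \<and>
     (\<forall>S U w. S \<subseteq> V \<and> U \<subseteq> V \<and> w \<in> V \<longrightarrow> g * rho1 f w (S \<union> U) \<le> rho1 f w S)"

definition submodularity_ratio :: "'a set \<Rightarrow> ('a set \<Rightarrow> real) \<Rightarrow> real \<Rightarrow> bool" where
  "submodularity_ratio V f g \<longleftrightarrow> ratio_ok V f g \<and> (\<forall>g'. ratio_ok V f g' \<longrightarrow> g' \<le> g)"

definition matroid :: "'a set \<Rightarrow> 'a set set \<Rightarrow> bool" where
  "matroid V F \<longleftrightarrow> F \<subseteq> Pow V \<and> {} \<in> F \<and>
     (\<forall>S T. T \<in> F \<and> S \<subseteq> T \<longrightarrow> S \<in> F) \<and>
     (\<forall>S1 S2. S1 \<in> F \<and> S2 \<in> F \<and> card S1 < card S2 \<longrightarrow> (\<exists>w \<in> S2 - S1. insert w S1 \<in> F))"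

text \<open>Reachable states (S,U) of the greedy algorithm (ties in the argmax are broken arbitrarily).\<close>
inductive greedy_state :: "'a set \<Rightarrow> 'a set set \<Rightarrow> ('a set \<Rightarrow> real) \<Rightarrow> 'a set \<Rightarrow> 'a set \<Rightarrow> bool"
  for V F f where
  init: "greedy_state V F f {} {}"
| step: "greedy_state V F f S U \<Longrightarrow> U \<noteq> V \<Longrightarrow> i \<in> V - U \<Longrightarrow>
         (\<forall>j \<in> V - U. rho1 f j S \<le> rho1 f i S) \<Longrightarrow>
         greedy_state V F f (if insert i S \<in> F then insert i S else S) (insert i U)"

definition greedy_output :: "'a set \<Rightarrow> 'a set set \<Rightarrow> ('a set \<Rightarrow> real) \<Rightarrow> 'a set \<Rightarrow> bool" where
  "greedy_output V F f SG \<longleftrightarrow> greedy_state V F f SG V"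

end

theory Submission
  imports Defs
begin

text \<open>
  Let \<open>S\<close> be the greedy set after \<open>k\<close> acceptances. For every independent \<open>T\<close> with
  \<open>|T| \<le> k\<close> and every \<open>W \<supseteq> S\<close>, the greedy gain \<open>f S - f {}\<close> dominates
  \<open>\<gamma> \<Sum>\<^sub>x\<^sub>\<in>\<^sub>T \<rho>\<^sub>x(W)\<close>: matroid augmentation pairs the extra element of \<open>T\<close> with the element
  greedy accepts next, and the submodularity ratio passes from \<open>\<rho>\<^sub>x(W)\<close> to \<open>\<rho>\<^sub>x(S)\<close>.
  The greedy output is a basis, so this applies to \<open>T = S\<^sup>*\<close> and \<open>W = S\<^sup>G\<close>; bounding
  the sum of marginals once more by the ratio gives
  \<open>\<gamma>\<^sup>2 (f(S\<^sup>G \<union> S\<^sup>*) - f S\<^sup>G) \<le> f S\<^sup>G - f {}\<close>, whence the ratio is at least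
  \<open>\<gamma>\<^sup>2/(\<gamma>\<^sup>2+1) \<ge> \<gamma>\<^sup>3/(\<gamma>\<^sup>3+1)\<close>, as \<open>\<gamma> \<le> 1\<close> unless \<open>f\<close> is constant.
  The rank \<open>K\<close> does not enter the argument.
\<close>

lemma nondecreasingD:
  assumes "nondecreasing V f" "A \<subseteq> B" "B \<subseteq> V"
  shows "f A \<le> f B"
proof (cases "A = B")
  case False
  then show ?thesis using assms unfolding nondecreasing_def by blast
qed simp

lemma matroid_subset_closed: "matroid V F \<Longrightarrow> T \<in> F \<Longrightarrow> S \<subseteq> T \<Longrightarrow> S \<in> F"
  unfolding matroid_def by blast

lemma matroid_subset_ground: "matroid V F \<Longrightarrow> T \<in> F \<Longrightarrow> T \<subseteq> V"
  unfolding matroid_def by blast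

lemma matroid_augment:
  "matroid V F \<Longrightarrow> S \<in> F \<Longrightarrow> T \<in> F \<Longrightarrow> card S < card T \<Longrightarrow> \<exists>w \<in> T - S. insert w S \<in> F"
  unfolding matroid_def by blast

lemma ratio_okD:
  "ratio_ok V f \<gamma> \<Longrightarrow> S \<subseteq> V \<Longrightarrow> U \<subseteq> V \<Longrightarrow> w \<in> V \<Longrightarrow> \<gamma> * rho1 f w (S \<union> U) \<le> rho1 f w S"
  unfolding ratio_ok_def by blast

lemma ratio_ok_nonneg: "ratio_ok V f \<gamma> \<Longrightarrow> \<gamma> \<ge> 0"
  unfolding ratio_ok_def by blast

lemma ratio_ok_sum_marginals:
  assumes "ratio_ok V f \<gamma>" "finite T" "T \<subseteq> V" "S \<subseteq> V"
  shows "\<gamma> * rho f T S \<le> (\<Sum>x\<in>T. rho1 f x S)"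
  using assms(2,3)
proof (induction T rule: finite_induct)
  case empty
  then show ?case by (simp add: rho_def)
next
  case (insert x T)
  have "\<gamma> * rho f (insert x T) S = \<gamma> * rho1 f x (S \<union> T) + \<gamma> * rho f T S"
    unfolding rho_def by (simp add: algebra_simps insert_commute)
  also have "\<dots> \<le> rho1 f x S + (\<Sum>x\<in>T. rho1 f x S)"
    using ratio_okD[OF assms(1) assms(4), of T x] insert.IH insert.prems by (auto intro: add_mono)
  finally show ?case using insert.hyps by simp
qed

lemma ratio_ok_le_one:
  assumes "ratio_ok V f \<gamma>" "finite T" "T \<subseteq> V" "f {} < f T"
  shows "\<gamma> \<le> 1"
proof (rule ccontr)
  assume "\<not> \<gamma> \<le> 1"
  have no_gain: "rho1 f w S \<le> 0" if "S \<subseteq> V" "w \<in> V" for S w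
  proof -
    have "\<gamma> * rho1 f w S \<le> rho1 f w S"
      using ratio_okD[OF assms(1) that(1) _ that(2), of "{}"] by simp
    then have "(\<gamma> - 1) * rho1 f w S \<le> 0" by (simp add: algebra_simps)
    then show ?thesis using \<open>\<not> \<gamma> \<le> 1\<close> by (simp add: mult_le_0_iff)
  qed
  have "f T \<le> f {}"
    using assms(2,3)
  proof (induction T rule: finite_induct)
    case (insert x T)
    then show ?case using no_gain[of T x] by (simp add: rho_def)
  qed simp
  then show False using assms(4) by simp
qed

lemma greedy_state_invariant:
  assumes "greedy_state V F f S U" "matroid V F"
  shows "S \<in> F \<and> S \<subseteq> U \<and> U \<subseteq> V \<and> (\<forall>x \<in> U - S. insert x S \<notin> F)"
  using assms(1)
proof (induction rule: greedy_state.induct)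
  case init
  then show ?case using assms(2) unfolding matroid_def by simp
next
  case (step S U i)
  have "insert x (insert i S) \<notin> F" if "x \<in> U - S" for x
    using step.IH that matroid_subset_closed[OF assms(2), of "insert x (insert i S)" "insert x S"]
    by blast
  then show ?case using step by auto
qed

lemma greedy_state_guarantee:
  assumes "greedy_state V F f S U" "matroid V F" "finite V" "ratio_ok V f \<gamma>"
    "nondecreasing V f" "T \<in> F" "card T \<le> card S" "S \<subseteq> W" "W \<subseteq> V"
  shows "\<gamma> * (\<Sum>x\<in>T. rho1 f x W) \<le> f S - f {}"
  using assms(1,6-9)
proof (induction arbitrary: T W rule: greedy_state.induct)
  case init
  then have "T = {}"
    using finite_subset[OF matroid_subset_ground[OF assms(2)] assms(3)] by auto
  then show ?case by simp
next
  case (step S U i)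
  note IH = step.IH
  have S: "S \<in> F" "S \<subseteq> U" "U \<subseteq> V" "\<forall>x \<in> U - S. insert x S \<notin> F"
    using greedy_state_invariant[OF step.hyps(1) assms(2)] by auto
  have "finite S" using finite_subset[OF _ assms(3), of S] S by blast
  show ?case
  proof (cases "insert i S \<in> F")
    case False
    then show ?thesis using IH step.prems False by (simp only: False if_False)
  next
    case True
    let ?S' = "insert i S"
    have T: "T \<in> F" "card T \<le> card ?S'" and W: "?S' \<subseteq> W" "W \<subseteq> V"
      using step.prems True by (simp_all only: if_True)
    have "i \<notin> S" "i \<in> V" using step.hyps S by auto
    have gain: "f S \<le> f ?S'" using nondecreasingD[OF assms(5), of S ?S'] \<open>i \<in> V\<close> S by auto
    show ?thesis
    proof (cases "card T \<le> card S")
      case True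
      then have "\<gamma> * (\<Sum>x\<in>T. rho1 f x W) \<le> f S - f {}" using IH T W by blast
      then show ?thesis using gain \<open>insert i S \<in> F\<close> by simp
    next
      case False
      have "finite T" using finite_subset[OF matroid_subset_ground[OF assms(2) T(1)] assms(3)] .
      have "card T = Suc (card S)" using False T(2) \<open>i \<notin> S\<close> \<open>finite S\<close> by simp
      then obtain x where x: "x \<in> T - S" "insert x S \<in> F"
        using matroid_augment[OF assms(2) S(1) T(1)] by auto
      have "x \<in> V" using x matroid_subset_ground[OF assms(2) T(1)] by auto
      have "x \<notin> U" using x S(4) by auto
      have "T - {x} \<in> F" using matroid_subset_closed[OF assms(2) T(1)] by blast
      moreover have "card (T - {x}) \<le> card S" using \<open>card T = Suc (card S)\<close> \<open>finite T\<close> x by simp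
      ultimately have rest: "\<gamma> * (\<Sum>y\<in>T - {x}. rho1 f y W) \<le> f S - f {}"
        using IH W by blast
      \<comment> \<open>\<open>x\<close> was still a candidate, so greedy's choice \<open>i\<close> gains at least as much.\<close>
      have "\<gamma> * rho1 f x (S \<union> W) \<le> rho1 f x S"
        using ratio_okD[OF assms(4)] S \<open>x \<in> V\<close> W by auto
      also have "\<dots> \<le> rho1 f i S" using step.hyps(4) \<open>x \<in> V\<close> \<open>x \<notin> U\<close> by auto
      also have "\<dots> = f ?S' - f S" unfolding rho_def by simp
      finally have "\<gamma> * rho1 f x W \<le> f ?S' - f S" using W by (simp add: sup.absorb2)
      moreover have "(\<Sum>y\<in>T. rho1 f y W) = rho1 f x W + (\<Sum>y\<in>T - {x}. rho1 f y W)"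
        using sum.remove[OF \<open>finite T\<close>] x by blast
      ultimately show ?thesis using rest True by (simp add: distrib_left)
    qed
  qed
qed

lemma greedy_output_is_basis:
  assumes "greedy_output V F f SG" "matroid V F" "T \<in> F"
  shows "card T \<le> card SG"
proof (rule ccontr)
  have SG: "SG \<in> F" "\<forall>x \<in> V - SG. insert x SG \<notin> F"
    using greedy_state_invariant[OF assms(1)[unfolded greedy_output_def] assms(2)] by auto
  assume "\<not> card T \<le> card SG"
  then obtain w where "w \<in> T - SG" "insert w SG \<in> F"
    using matroid_augment[OF assms(2) SG(1) assms(3)] by auto
  then show False using SG(2) matroid_subset_ground[OF assms(2) assms(3)] by auto
qed

lemma greedy_output_guarantee:
  assumes "greedy_output V F f SG" "matroid V F" "finite V" "ratio_ok V f \<gamma>"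
    "nondecreasing V f" "T \<in> F"
  shows "\<gamma>\<^sup>2 * rho f T SG \<le> f SG - f {}"
proof -
  have gs: "greedy_state V F f SG V" using assms(1) unfolding greedy_output_def .
  have "SG \<subseteq> V" "T \<subseteq> V"
    using greedy_state_invariant[OF gs assms(2)] matroid_subset_ground[OF assms(2,6)] by auto
  have "\<gamma>\<^sup>2 * rho f T SG = \<gamma> * (\<gamma> * rho f T SG)" by (simp add: power2_eq_square)
  also have "\<dots> \<le> \<gamma> * (\<Sum>x\<in>T. rho1 f x SG)"
    using ratio_ok_sum_marginals[OF assms(4) _ \<open>T \<subseteq> V\<close> \<open>SG \<subseteq> V\<close>] finite_subset[OF \<open>T \<subseteq> V\<close> assms(3)]
      ratio_ok_nonneg[OF assms(4)] by (simp add: mult_left_mono)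
  also have "\<dots> \<le> f SG - f {}"
    using greedy_state_guarantee[OF gs assms(2-6) greedy_output_is_basis[OF assms(1,2,6)]]
      \<open>SG \<subseteq> V\<close> by simp
  finally show ?thesis .
qed

lemma ratio_bound_from_gain:
  fixes a b c \<gamma> :: real
  assumes "0 \<le> a" "0 < b" "b - a \<le> c" "\<gamma>\<^sup>2 * c \<le> a" "0 \<le> \<gamma>" "\<gamma> \<le> 1"
  shows "\<gamma> ^ 3 / (\<gamma> ^ 3 + 1) \<le> a / b"
proof -
  have "\<gamma> ^ 3 \<le> \<gamma>\<^sup>2" using assms(5,6) by (simp add: power_decreasing)
  have "\<gamma>\<^sup>2 * (b - a) \<le> a"
    using mult_left_mono[OF assms(3), of "\<gamma>\<^sup>2"] assms(4) by simp
  then have "\<gamma>\<^sup>2 * b \<le> a * (\<gamma>\<^sup>2 + 1)" by (simp add: algebra_simps)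
  have "\<gamma> ^ 3 * (\<gamma>\<^sup>2 + 1) \<le> \<gamma>\<^sup>2 * (\<gamma> ^ 3 + 1)"
    using \<open>\<gamma> ^ 3 \<le> \<gamma>\<^sup>2\<close> by (simp add: algebra_simps)
  have "0 < \<gamma>\<^sup>2 + 1" "0 < \<gamma> ^ 3 + 1"
    using assms(5) by (simp_all add: add_nonneg_pos)
  then have "\<gamma> ^ 3 / (\<gamma> ^ 3 + 1) \<le> \<gamma>\<^sup>2 / (\<gamma>\<^sup>2 + 1)"
    using \<open>\<gamma> ^ 3 * (\<gamma>\<^sup>2 + 1) \<le> \<gamma>\<^sup>2 * (\<gamma> ^ 3 + 1)\<close> by (simp add: divide_simps)
  also have "\<dots> \<le> a / b"
    using \<open>\<gamma>\<^sup>2 * b \<le> a * (\<gamma>\<^sup>2 + 1)\<close> \<open>0 < \<gamma>\<^sup>2 + 1\<close> assms(2) by (simp add: divide_simps)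
  finally show ?thesis .
qed

theorem theorem2:
  fixes V :: "'a set" and F :: "'a set set" and f :: "'a set \<Rightarrow> real"
    and K :: nat and \<gamma> :: real and Sstar SG :: "'a set"
  assumes "finite V"
    and "matroid V F"
    and "K = Max (card ` F)"
    and "nondecreasing V f"
    and "submodularity_ratio V f \<gamma>"
    and "Sstar \<in> F" and "\<forall>S \<in> F. f S \<le> f Sstar"
    and "greedy_output V F f SG"
    and "f Sstar \<noteq> f {}"
  shows "(f SG - f {}) / (f Sstar - f {}) \<ge> \<gamma> ^ 3 / (\<gamma> ^ 3 + 1)"
proof -
  have ratio: "ratio_ok V f \<gamma>" using assms(5) unfolding submodularity_ratio_def by blast
  have "SG \<subseteq> V" "Sstar \<subseteq> V"
    using greedy_state_invariant[OF assms(8)[unfolded greedy_output_def] assms(2)]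
      matroid_subset_ground[OF assms(2,6)] by auto
  then have "f {} \<le> f SG" "f {} < f Sstar" "f Sstar \<le> f (SG \<union> Sstar)"
    using nondecreasingD[OF assms(4)] assms(9) by (auto simp: order.not_eq_order_implies_strict)
  moreover have "\<gamma> \<le> 1"
    using ratio_ok_le_one[OF ratio _ \<open>Sstar \<subseteq> V\<close>] finite_subset[OF \<open>Sstar \<subseteq> V\<close> assms(1)]
      \<open>f {} < f Sstar\<close> by blast
  moreover have "\<gamma>\<^sup>2 * rho f Sstar SG \<le> f SG - f {}"
    using greedy_output_guarantee[OF assms(8,2,1) ratio assms(4,6)] .
  ultimately show ?thesis
    using ratio_bound_from_gain[of "f SG - f {}" "f Sstar - f {}" "rho f Sstar SG" \<gamma>]
      ratio_ok_nonneg[OF ratio] by (simp add: rho_def sup_commute)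
qed

end
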